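(* Let $f:\{0,1\}^N\to\{0,1\}$ be a partial function, and let $\mathrm{Dom}(f)$ denote the domain of $f$. Then \[\mathrm{Q}(f)= \Omega\left(\frac{\sqrt{\mathrm{D}(f)}}{\log|\mathrm{Dom}(f)|}\right).\]
   Context: $\mathrm{D}(f)$ is the deterministic query complexity and $\mathrm{Q}(f)$ the bounded-error quantum query complexity of $f$. *)

theory Defs
  imports Complex_Main
begin

definition partial_fun_on :: "nat \<Rightarrow> (bool list \<rightharpoonup> bool) \<Rightarrow> bool" where
  "partial_fun_on N f \<longleftrightarrow> dom f \<subseteq> {xs. length xs = N}"

datatype dtree = Leaf bool | Node nat dtree dtree

fun dt_eval :: "dtree \<Rightarrow> bool list \<Rightarrow> bool" where
  "dt_eval (Leaf b) x = b"
| "dt_eval (Node i t0 t1) x = (if x ! i then dt_eval t1 x else dt_eval t0 x)"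

fun dt_depth :: "dtree \<Rightarrow> nat" where
  "dt_depth (Leaf b) = 0"
| "dt_depth (Node i t0 t1) = Suc (max (dt_depth t0) (dt_depth t1))"

fun dt_valid :: "nat \<Rightarrow> dtree \<Rightarrow> bool" where
  "dt_valid N (Leaf b) = True"
| "dt_valid N (Node i t0 t1) = (i < N \<and> dt_valid N t0 \<and> dt_valid N t1)"

definition D :: "nat \<Rightarrow> (bool list \<rightharpoonup> bool) \<Rightarrow> nat" where
  "D N f = (LEAST d. \<exists>t. dt_valid N t \<and> dt_depth t = d \<and>
                         (\<forall>x\<in>dom f. Some (dt_eval t x) = f x))"

text \<open>Square complex matrices of dimension d are represented as functions
  nat => nat => complex (entries with indices < d); vectors as nat => complex.\<close>

definition unitary_mat :: "nat \<Rightarrow> (nat \<Rightarrow> nat \<Rightarrow> complex) \<Rightarrow> bool" where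
  "unitary_mat d U \<longleftrightarrow>
     (\<forall>j<d. \<forall>k<d. (\<Sum>l<d. cnj (U l j) * U l k) = (if j = k then 1 else 0))"

definition mat_vec :: "nat \<Rightarrow> (nat \<Rightarrow> nat \<Rightarrow> complex) \<Rightarrow> (nat \<Rightarrow> complex) \<Rightarrow> (nat \<Rightarrow> complex)" where
  "mat_vec d U v = (\<lambda>j. if j < d then (\<Sum>k<d. U j k * v k) else 0)"

text \<open>The state space has dimension (N+1)*W; basis state k encodes the query
  register i = k mod (N+1) (i = 0: no query, i >= 1: query bit i-1) and
  workspace k div (N+1).  The phase query O_x maps |i,w> to (-1)^(x_(i-1)) |i,w>
  for i >= 1 and leaves |0,w> fixed.\<close>

definition query_op :: "nat \<Rightarrow> bool list \<Rightarrow> (nat \<Rightarrow> complex) \<Rightarrow> (nat \<Rightarrow> complex)" where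
  "query_op N x v = (\<lambda>k. (if k mod (N + 1) \<noteq> 0 \<and> x ! (k mod (N + 1) - 1) then -1 else 1) * v k)"

definition init_state :: "nat \<Rightarrow> complex" where
  "init_state = (\<lambda>k. if k = 0 then 1 else 0)"

text \<open>Final state of the algorithm U_T O_x ... U_1 O_x U_0 |0>, where Us = [U_1,...,U_T].\<close>

definition final_state :: "nat \<Rightarrow> nat \<Rightarrow> (nat \<Rightarrow> nat \<Rightarrow> complex) \<Rightarrow>
     (nat \<Rightarrow> nat \<Rightarrow> complex) list \<Rightarrow> bool list \<Rightarrow> (nat \<Rightarrow> complex)" where
  "final_state N W U0 Us x =
     foldl (\<lambda>v U. mat_vec ((N + 1) * W) U (query_op N x v))
           (mat_vec ((N + 1) * W) U0 init_state) Us"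

definition accept_prob :: "nat \<Rightarrow> nat \<Rightarrow> (nat \<Rightarrow> nat \<Rightarrow> complex) \<Rightarrow>
     (nat \<Rightarrow> nat \<Rightarrow> complex) list \<Rightarrow> nat set \<Rightarrow> bool list \<Rightarrow> real" where
  "accept_prob N W U0 Us Acc x = (\<Sum>k\<in>Acc. (cmod (final_state N W U0 Us x k))\<^sup>2)"

definition computes_bounded_error ::
  "nat \<Rightarrow> (bool list \<rightharpoonup> bool) \<Rightarrow> nat \<Rightarrow> (nat \<Rightarrow> nat \<Rightarrow> complex) \<Rightarrow>
   (nat \<Rightarrow> nat \<Rightarrow> complex) list \<Rightarrow> nat set \<Rightarrow> bool" where
  "computes_bounded_error N f W U0 Us Acc \<longleftrightarrow>
     W \<ge> 1 \<and> unitary_mat ((N + 1) * W) U0 \<and> (\<forall>U\<in>set Us. unitary_mat ((N + 1) * W) U) \<and>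
     Acc \<subseteq> {..<(N + 1) * W} \<and>
     (\<forall>x\<in>dom f. (f x = Some True \<longrightarrow> accept_prob N W U0 Us Acc x \<ge> 2/3) \<and>
                  (f x = Some False \<longrightarrow> accept_prob N W U0 Us Acc x \<le> 1/3))"

definition Q :: "nat \<Rightarrow> (bool list \<rightharpoonup> bool) \<Rightarrow> nat" where
  "Q N f = (LEAST T. \<exists>W U0 Us Acc. length Us = T \<and> computes_bounded_error N f W U0 Us Acc)"

end

theory Submission
  imports Defs
begin

text \<open>Fix a bounded-error algorithm making \<open>T\<close> queries.  If its acceptance probabilities on
  inputs \<open>x\<close> and \<open>z\<close> differ by a constant, the hybrid argument shows that the run on \<open>z\<close>
  puts total query mass \<open>\<Omega>(1/T)\<close> on the positions where \<open>x\<close> and \<open>z\<close> differ.  Given a set \<open>S\<close>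
  of inputs on which \<open>f\<close> takes both values, let \<open>z\<close> be the bitwise majority of \<open>S\<close> and \<open>b\<close>
  the value the algorithm does not favour on \<open>z\<close>: every input of value \<open>b\<close> is far from \<open>z\<close>,
  so averaging the query masses over them yields a position \<open>i\<close> at which an \<open>\<Omega>(1/T\<^sup>2)\<close>
  fraction of them differs from \<open>z\<close>.

  Querying \<open>x\<^sub>i\<close> therefore either halves \<open>S\<close> (minority answer) or removes a \<open>1/K\<close>
  fraction, \<open>K = O(T\<^sup>2)\<close>, of the inputs of value \<open>b\<close> (majority answer).  Either way the potential
  \<open>log\<^sub>2 |S| + K (ln |S\<^sub>0| + ln |S\<^sub>1|)\<close> drops by at least \<open>1\<close>, which gives a decision tree
  of depth \<open>O(T\<^sup>2 log |Dom f|)\<close>.  Hence \<open>D(f) = O(Q(f)\<^sup>2 log |Dom f|)\<close>, and the claim follows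
  from \<open>\<surd>log |Dom f| \<le> log |Dom f|\<close>.\<close>

section \<open>Norm-preserving evolution and the hybrid argument\<close>

definition vec_norm2 :: "nat \<Rightarrow> (nat \<Rightarrow> complex) \<Rightarrow> real" where
  "vec_norm2 d v = (\<Sum>k<d. (cmod (v k))\<^sup>2)"

lemma of_real_vec_norm2: "complex_of_real (vec_norm2 d v) = (\<Sum>k<d. v k * cnj (v k))"
  unfolding vec_norm2_def by (simp only: of_real_sum complex_norm_square)

lemma vec_norm2_mat_vec:
  assumes "unitary_mat d U"
  shows "vec_norm2 d (mat_vec d U v) = vec_norm2 d v"
proof -
  have U: "\<And>k l. k < d \<Longrightarrow> l < d \<Longrightarrow> (\<Sum>j<d. cnj (U j l) * U j k) = of_bool (l = k)"
    using assms unfolding unitary_mat_def by simp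
  have "complex_of_real (vec_norm2 d (mat_vec d U v))
      = (\<Sum>j<d. (\<Sum>k<d. U j k * v k) * (\<Sum>l<d. cnj (U j l) * cnj (v l)))"
    unfolding of_real_vec_norm2 mat_vec_def by (simp add: cnj_sum)
  also have "\<dots> = (\<Sum>j<d. \<Sum>k<d. \<Sum>l<d. v k * cnj (v l) * (cnj (U j l) * U j k))"
    by (simp add: sum_product mult_ac)
  also have "\<dots> = (\<Sum>k<d. \<Sum>l<d. v k * cnj (v l) * (\<Sum>j<d. cnj (U j l) * U j k))"
    by (subst sum.swap, rule sum.cong[OF refl], subst sum.swap) (simp add: sum_distrib_left)
  also have "\<dots> = (\<Sum>k<d. \<Sum>l<d. v k * cnj (v l) * of_bool (l = k))"
    by (intro sum.cong refl) (simp add: U)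
  also have "\<dots> = complex_of_real (vec_norm2 d v)"
    unfolding of_real_vec_norm2 by (simp add: of_bool_def if_distrib cong: if_cong)
  finally show ?thesis by (simp only: of_real_eq_iff)
qed

definition query_sign :: "nat \<Rightarrow> bool list \<Rightarrow> nat \<Rightarrow> complex" where
  "query_sign N x k = (if k mod (N + 1) \<noteq> 0 \<and> x ! (k mod (N + 1) - 1) then -1 else 1)"

lemma query_op_eq: "query_op N x v = (\<lambda>k. query_sign N x k * v k)"
  unfolding query_op_def query_sign_def by simp

lemma norm_query_sign [simp]: "cmod (query_sign N x k) = 1"
  unfolding query_sign_def by simp

lemma vec_norm2_query_op: "vec_norm2 d (query_op N x v) = vec_norm2 d v"
  unfolding vec_norm2_def query_op_eq by (simp add: norm_mult)

lemma mat_vec_diff: "mat_vec d U v k - mat_vec d U w k = mat_vec d U (\<lambda>k. v k - w k) k"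
  unfolding mat_vec_def by (simp add: sum_subtractf[symmetric] right_diff_distrib)

lemma norm_add_sq_le:
  fixes a b :: "'a::real_normed_vector" and \<eta> :: real
  assumes "\<eta> > 0"
  shows "(norm (a + b))\<^sup>2 \<le> (1 + \<eta>) * (norm a)\<^sup>2 + (1 + 1 / \<eta>) * (norm b)\<^sup>2"
proof -
  have "2 * (\<eta> * norm a) * norm b \<le> (\<eta> * norm a)\<^sup>2 + (norm b)\<^sup>2"
    by (rule sum_squares_bound)
  then have "2 * norm a * norm b \<le> \<eta> * (norm a)\<^sup>2 + (norm b)\<^sup>2 / \<eta>"
    using assms by (simp add: field_simps power2_eq_square)
  have "(norm (a + b))\<^sup>2 \<le> (norm a + norm b)\<^sup>2"
    by (simp add: norm_triangle_ineq power_mono)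
  also have "\<dots> = (norm a)\<^sup>2 + 2 * norm a * norm b + (norm b)\<^sup>2"
    by (simp add: power2_sum)
  also have "\<dots> \<le> (1 + \<eta>) * (norm a)\<^sup>2 + (1 + 1 / \<eta>) * (norm b)\<^sup>2"
    using \<open>2 * norm a * norm b \<le> _\<close> by (simp add: algebra_simps)
  finally show ?thesis .
qed

definition unitary_algorithm ::
  "nat \<Rightarrow> nat \<Rightarrow> (nat \<Rightarrow> nat \<Rightarrow> complex) \<Rightarrow> (nat \<Rightarrow> nat \<Rightarrow> complex) list \<Rightarrow> bool" where
  "unitary_algorithm N W U0 Us \<longleftrightarrow>
     W \<ge> 1 \<and> unitary_mat ((N + 1) * W) U0 \<and> (\<forall>U\<in>set Us. unitary_mat ((N + 1) * W) U)"

lemma computes_bounded_error_unitary_algorithm: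
  "computes_bounded_error N f W U0 Us Acc \<Longrightarrow> unitary_algorithm N W U0 Us"
  unfolding computes_bounded_error_def unitary_algorithm_def by blast

definition state :: "nat \<Rightarrow> nat \<Rightarrow> (nat \<Rightarrow> nat \<Rightarrow> complex) \<Rightarrow>
     (nat \<Rightarrow> nat \<Rightarrow> complex) list \<Rightarrow> bool list \<Rightarrow> nat \<Rightarrow> (nat \<Rightarrow> complex)" where
  "state N W U0 Us x t = final_state N W U0 (take t Us) x"

lemma state_0: "state N W U0 Us x 0 = mat_vec ((N + 1) * W) U0 init_state"
  unfolding state_def final_state_def by simp

lemma state_Suc: "t < length Us \<Longrightarrow>
   state N W U0 Us x (Suc t) = mat_vec ((N + 1) * W) (Us ! t) (query_op N x (state N W U0 Us x t))"
  unfolding state_def final_state_def by (simp add: take_Suc_conv_app_nth)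

lemma state_length: "state N W U0 Us x (length Us) = final_state N W U0 Us x"
  unfolding state_def by simp

lemma vec_norm2_init_state: "d \<ge> 1 \<Longrightarrow> vec_norm2 d init_state = 1"
proof -
  assume "d \<ge> 1"
  have "vec_norm2 d init_state = (\<Sum>k<d. if k = 0 then 1 else 0)"
    unfolding vec_norm2_def init_state_def by (intro sum.cong) auto
  then show ?thesis using \<open>d \<ge> 1\<close> by simp
qed

lemma vec_norm2_state:
  assumes "unitary_algorithm N W U0 Us" "t \<le> length Us"
  shows "vec_norm2 ((N + 1) * W) (state N W U0 Us x t) = 1"
  using assms(2)
proof (induction t)
  case 0
  then show ?case using assms(1) unfolding unitary_algorithm_def
    by (simp add: state_0 vec_norm2_mat_vec vec_norm2_init_state)
next
  case (Suc t)
  then have "unitary_mat ((N + 1) * W) (Us ! t)"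
    using assms(1) unfolding unitary_algorithm_def by auto
  then show ?case using Suc by (simp add: state_Suc vec_norm2_mat_vec vec_norm2_query_op)
qed

definition query_differs :: "nat \<Rightarrow> bool list \<Rightarrow> bool list \<Rightarrow> nat \<Rightarrow> bool" where
  "query_differs N x z k \<longleftrightarrow>
     k mod (N + 1) \<noteq> 0 \<and> x ! (k mod (N + 1) - 1) \<noteq> z ! (k mod (N + 1) - 1)"

lemma norm_query_sign_diff:
  "cmod (query_sign N x k - query_sign N z k) = (if query_differs N x z k then 2 else 0)"
  unfolding query_sign_def query_differs_def by auto

definition query_mass ::
  "nat \<Rightarrow> nat \<Rightarrow> (nat \<Rightarrow> nat \<Rightarrow> complex) \<Rightarrow> (nat \<Rightarrow> nat \<Rightarrow> complex) list \<Rightarrow>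
   bool list \<Rightarrow> bool list \<Rightarrow> nat \<Rightarrow> real" where
  "query_mass N W U0 Us x z t =
     (\<Sum>k<(N + 1) * W. if query_differs N x z k then (cmod (state N W U0 Us z t k))\<^sup>2 else 0)"

definition state_dist2 ::
  "nat \<Rightarrow> nat \<Rightarrow> (nat \<Rightarrow> nat \<Rightarrow> complex) \<Rightarrow> (nat \<Rightarrow> nat \<Rightarrow> complex) list \<Rightarrow>
   bool list \<Rightarrow> bool list \<Rightarrow> nat \<Rightarrow> real" where
  "state_dist2 N W U0 Us x z t =
     vec_norm2 ((N + 1) * W) (\<lambda>k. state N W U0 Us x t k - state N W U0 Us z t k)"

lemma query_mass_nonneg: "query_mass N W U0 Us x z t \<ge> 0"
  unfolding query_mass_def by (intro sum_nonneg) auto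

lemma norm2_query_step_le:
  assumes "\<eta> > 0"
  shows "(cmod (query_sign N x k * a - query_sign N z k * b))\<^sup>2
     \<le> (1 + \<eta>) * (cmod (a - b))\<^sup>2
       + (1 + 1 / \<eta>) * (if query_differs N x z k then 4 * (cmod b)\<^sup>2 else 0)"
proof -
  have "query_sign N x k * a - query_sign N z k * b
      = query_sign N x k * (a - b) + (query_sign N x k - query_sign N z k) * b"
    by (simp add: algebra_simps)
  also have "(cmod \<dots>)\<^sup>2 \<le> (1 + \<eta>) * (cmod (query_sign N x k * (a - b)))\<^sup>2
      + (1 + 1 / \<eta>) * (cmod ((query_sign N x k - query_sign N z k) * b))\<^sup>2"
    by (rule norm_add_sq_le[OF assms])
  finally show ?thesis
    by (cases "query_differs N x z k")
      (simp_all add: norm_mult norm_query_sign_diff power_mult_distrib)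
qed

lemma state_dist2_Suc_le:
  assumes alg: "unitary_algorithm N W U0 Us" and t: "t < length Us" and \<eta>: "\<eta> > 0"
  shows "state_dist2 N W U0 Us x z (Suc t)
     \<le> (1 + \<eta>) * state_dist2 N W U0 Us x z t + 4 * (1 + 1 / \<eta>) * query_mass N W U0 Us x z t"
proof -
  define d where "d = (N + 1) * W"
  define u where "u = state N W U0 Us x t"
  define v where "v = state N W U0 Us z t"
  have U: "unitary_mat d (Us ! t)"
    using alg t unfolding unitary_algorithm_def d_def by auto
  have "state_dist2 N W U0 Us x z (Suc t)
      = vec_norm2 d (mat_vec d (Us ! t) (\<lambda>k. query_op N x u k - query_op N z v k))"
    unfolding state_dist2_def using t by (simp add: state_Suc mat_vec_diff d_def u_def v_def)
  also have "\<dots> = vec_norm2 d (\<lambda>k. query_op N x u k - query_op N z v k)"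
    by (rule vec_norm2_mat_vec[OF U])
  also have "\<dots> = (\<Sum>k<d. (cmod (query_sign N x k * u k - query_sign N z k * v k))\<^sup>2)"
    unfolding vec_norm2_def query_op_eq ..
  also have "\<dots> \<le> (\<Sum>k<d. (1 + \<eta>) * (cmod (u k - v k))\<^sup>2
      + (1 + 1 / \<eta>) * (if query_differs N x z k then 4 * (cmod (v k))\<^sup>2 else 0))"
    by (intro sum_mono norm2_query_step_le \<eta>)
  also have "\<dots> = (\<Sum>k<d. (1 + \<eta>) * (cmod (u k - v k))\<^sup>2
      + 4 * (1 + 1 / \<eta>) * (if query_differs N x z k then (cmod (v k))\<^sup>2 else 0))"
    by (intro sum.cong) auto
  also have "\<dots> = (1 + \<eta>) * state_dist2 N W U0 Us x z t
      + 4 * (1 + 1 / \<eta>) * query_mass N W U0 Us x z t"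
    unfolding state_dist2_def query_mass_def vec_norm2_def d_def u_def v_def
    by (simp only: sum.distrib sum_distrib_left)
  finally show ?thesis .
qed

lemma state_dist2_le:
  assumes alg: "unitary_algorithm N W U0 Us" and t: "t \<le> length Us" and \<eta>: "\<eta> > 0"
  shows "state_dist2 N W U0 Us x z t
     \<le> (1 + \<eta>) ^ t * (4 * (1 + 1 / \<eta>) * (\<Sum>s<t. query_mass N W U0 Us x z s))"
  using t
proof (induction t)
  case 0
  then show ?case by (simp add: state_dist2_def vec_norm2_def state_0)
next
  case (Suc t)
  define c where "c = 4 * (1 + 1 / \<eta>)"
  define m where "m = query_mass N W U0 Us x z t"
  define S where "S = (\<Sum>s<t. query_mass N W U0 Us x z s)"
  have c: "c \<ge> 0" and m: "m \<ge> 0"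
    using \<eta> query_mass_nonneg unfolding c_def m_def by auto
  have grow: "1 \<le> (1 + \<eta>) ^ Suc t"
    using \<eta> by (intro one_le_power) simp
  have "state_dist2 N W U0 Us x z (Suc t) \<le> (1 + \<eta>) * state_dist2 N W U0 Us x z t + c * m"
    using state_dist2_Suc_le[OF alg _ \<eta>, of t x z] Suc.prems unfolding c_def m_def by simp
  also have "\<dots> \<le> (1 + \<eta>) * ((1 + \<eta>) ^ t * (c * S)) + c * m"
    using Suc \<eta> unfolding c_def S_def by (intro add_mono mult_left_mono) auto
  also have "c * m \<le> (1 + \<eta>) ^ Suc t * (c * m)"
    using mult_right_mono[OF grow, of "c * m"] c m by simp
  finally show ?case
    unfolding c_def m_def S_def by (simp add: algebra_simps)
qed

lemma one_plus_inverse_power_le_3: "T \<ge> 1 \<Longrightarrow> (1 + 1 / real T) ^ T \<le> 3"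
proof -
  assume "T \<ge> 1"
  have "(1 + 1 / real T) ^ T \<le> exp (1 / real T) ^ T"
    by (intro power_mono) (auto simp: exp_ge_add_one_self add.commute)
  also have "\<dots> = exp 1"
    using \<open>T \<ge> 1\<close> by (simp flip: exp_of_nat_mult)
  also have "\<dots> \<le> 3" by (rule exp_le)
  finally show ?thesis .
qed

lemma final_state_dist2_le:
  assumes "unitary_algorithm N W U0 Us"
  shows "state_dist2 N W U0 Us x z (length Us)
     \<le> 12 * (real (length Us) + 1) * (\<Sum>s<length Us. query_mass N W U0 Us x z s)"
proof (cases "length Us = 0")
  case True
  then show ?thesis by (simp add: state_dist2_def vec_norm2_def state_0)
next
  case False
  define T where "T = length Us"
  define S where "S = (\<Sum>s<T. query_mass N W U0 Us x z s)"
  have "S \<ge> 0" unfolding S_def by (intro sum_nonneg query_mass_nonneg)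
  have "state_dist2 N W U0 Us x z T \<le> (1 + 1 / real T) ^ T * (4 * (1 + 1 / (1 / real T)) * S)"
    using state_dist2_le[OF assms, of T "1 / real T" x z] False unfolding T_def S_def by simp
  also have "\<dots> \<le> 3 * (4 * (1 + 1 / (1 / real T)) * S)"
    using one_plus_inverse_power_le_3[of T] \<open>S \<ge> 0\<close> False unfolding T_def
    by (intro mult_right_mono) auto
  also have "\<dots> = 12 * (real T + 1) * S" by simp
  finally show ?thesis unfolding T_def S_def .
qed

lemma accept_mass_le:
  assumes Acc: "Acc \<subseteq> {..<d}" and w: "vec_norm2 d w = 1" and \<eta>: "\<eta> > 0"
  shows "(\<Sum>k\<in>Acc. (cmod (v k))\<^sup>2)
     \<le> (\<Sum>k\<in>Acc. (cmod (w k))\<^sup>2) + \<eta> + (1 + 1 / \<eta>) * vec_norm2 d (\<lambda>k. v k - w k)"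
proof -
  have "finite Acc" using Acc finite_subset by blast
  have w_Acc: "(\<Sum>k\<in>Acc. (cmod (w k))\<^sup>2) \<le> 1"
    using w Acc unfolding vec_norm2_def by (metis finite_lessThan sum_mono2 zero_le_power2)
  have diff_Acc: "(\<Sum>k\<in>Acc. (cmod (v k - w k))\<^sup>2) \<le> vec_norm2 d (\<lambda>k. v k - w k)"
    using Acc unfolding vec_norm2_def by (intro sum_mono2) auto
  have "(\<Sum>k\<in>Acc. (cmod (v k))\<^sup>2)
      \<le> (\<Sum>k\<in>Acc. (1 + \<eta>) * (cmod (w k))\<^sup>2 + (1 + 1 / \<eta>) * (cmod (v k - w k))\<^sup>2)"
  proof (rule sum_mono)
    fix k
    show "(cmod (v k))\<^sup>2 \<le> (1 + \<eta>) * (cmod (w k))\<^sup>2 + (1 + 1 / \<eta>) * (cmod (v k - w k))\<^sup>2"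
      using norm_add_sq_le[OF \<eta>, of "w k" "v k - w k"] by simp
  qed
  also have "\<dots> = (\<Sum>k\<in>Acc. (cmod (w k))\<^sup>2) + \<eta> * (\<Sum>k\<in>Acc. (cmod (w k))\<^sup>2)
      + (1 + 1 / \<eta>) * (\<Sum>k\<in>Acc. (cmod (v k - w k))\<^sup>2)"
    by (simp add: sum.distrib sum_distrib_left algebra_simps)
  also have "\<dots> \<le> (\<Sum>k\<in>Acc. (cmod (w k))\<^sup>2) + \<eta> * 1 + (1 + 1 / \<eta>) * vec_norm2 d (\<lambda>k. v k - w k)"
    using w_Acc diff_Acc \<eta> by (intro add_mono mult_left_mono) auto
  finally show ?thesis by simp
qed

lemma query_mass_sum_ge:
  assumes alg: "unitary_algorithm N W U0 Us" and Acc: "Acc \<subseteq> {..<(N + 1) * W}"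
    and far: "\<bar>accept_prob N W U0 Us Acc x - accept_prob N W U0 Us Acc z\<bar> \<ge> 1 / 6"
  shows "(\<Sum>s<length Us. query_mass N W U0 Us x z s) \<ge> 1 / (1872 * (real (length Us) + 1))"
proof -
  define d where "d = (N + 1) * W"
  define u where "u = final_state N W U0 Us x"
  define v where "v = final_state N W U0 Us z"
  have norm_u: "vec_norm2 d u = 1" and norm_v: "vec_norm2 d v = 1"
    using vec_norm2_state[OF alg order.refl] unfolding u_def v_def d_def state_length by auto
  have dist: "state_dist2 N W U0 Us x z (length Us) = vec_norm2 d (\<lambda>k. u k - v k)"
    unfolding state_dist2_def state_length u_def v_def d_def ..
  have "vec_norm2 d (\<lambda>k. v k - u k) = vec_norm2 d (\<lambda>k. u k - v k)"
    unfolding vec_norm2_def by (simp add: norm_minus_commute)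
  moreover have
    "accept_prob N W U0 Us Acc x
       \<le> accept_prob N W U0 Us Acc z + 1/12 + 13 * vec_norm2 d (\<lambda>k. u k - v k)"
    "accept_prob N W U0 Us Acc z
       \<le> accept_prob N W U0 Us Acc x + 1/12 + 13 * vec_norm2 d (\<lambda>k. v k - u k)"
    using accept_mass_le[OF Acc[folded d_def] norm_v, of "1/12" u]
      accept_mass_le[OF Acc[folded d_def] norm_u, of "1/12" v]
    unfolding accept_prob_def u_def v_def by simp_all
  ultimately have "1 / 156 \<le> state_dist2 N W U0 Us x z (length Us)"
    using far dist by linarith
  then have "1 / 156 \<le> 12 * (real (length Us) + 1) * (\<Sum>s<length Us. query_mass N W U0 Us x z s)"
    using final_state_dist2_le[OF alg, of x z] by linarith
  then show ?thesis by (simp add: field_simps)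
qed

section \<open>A position separating many inputs from a given one\<close>

definition value_class :: "bool list set \<Rightarrow> (bool list \<rightharpoonup> bool) \<Rightarrow> bool \<Rightarrow> bool list set" where
  "value_class S f b = {x\<in>S. f x = Some b}"

definition bichromatic :: "bool list set \<Rightarrow> (bool list \<rightharpoonup> bool) \<Rightarrow> bool" where
  "bichromatic S f \<longleftrightarrow> value_class S f True \<noteq> {} \<and> value_class S f False \<noteq> {}"

lemma sum_query_mass_le:
  assumes alg: "unitary_algorithm N W U0 Us" and A: "finite A" and "B \<ge> 0"
    and B: "\<And>i. i < N \<Longrightarrow> real (card {x\<in>A. x ! i \<noteq> z ! i}) \<le> B"
  shows "(\<Sum>x\<in>A. \<Sum>s<length Us. query_mass N W U0 Us x z s) \<le> real (length Us) * B"
proof -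
  define d where "d = (N + 1) * W"
  define p where "p s k = (cmod (state N W U0 Us z s k))\<^sup>2" for s k
  have differs_le: "real (card {x\<in>A. query_differs N x z k}) \<le> B" for k
  proof (cases "k mod (N + 1) = 0")
    case True
    then show ?thesis using \<open>B \<ge> 0\<close> by (simp add: query_differs_def)
  next
    case False
    have "k mod (N + 1) < N + 1" by simp
    then have "k mod (N + 1) - 1 < N" using False by arith
    moreover have "{x\<in>A. query_differs N x z k}
        = {x\<in>A. x ! (k mod (N + 1) - 1) \<noteq> z ! (k mod (N + 1) - 1)}"
      using False by (simp add: query_differs_def)
    ultimately show ?thesis using B by simp
  qed
  have "(\<Sum>x\<in>A. \<Sum>s<length Us. query_mass N W U0 Us x z s)
      = (\<Sum>s<length Us. \<Sum>k<d. \<Sum>x\<in>A. if query_differs N x z k then p s k else 0)"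
    unfolding query_mass_def d_def p_def by (subst sum.swap, rule sum.cong[OF refl], rule sum.swap)
  also have "\<dots> = (\<Sum>s<length Us. \<Sum>k<d. p s k * real (card {x\<in>A. query_differs N x z k}))"
    using A by (simp add: sum.If_cases Int_def mult.commute conj_commute)
  also have "\<dots> \<le> (\<Sum>s<length Us. \<Sum>k<d. p s k * B)"
    by (intro sum_mono mult_left_mono differs_le) (simp add: p_def)
  also have "\<dots> = (\<Sum>s<length Us. B)"
    using vec_norm2_state[OF alg] unfolding p_def d_def vec_norm2_def
    by (simp add: sum_distrib_right[symmetric])
  finally show ?thesis by simp
qed

lemma computes_bounded_error_accept_prob:
  assumes "computes_bounded_error N f W U0 Us Acc" "f x = Some b"
  shows "if b then accept_prob N W U0 Us Acc x \<ge> 2/3 else accept_prob N W U0 Us Acc x \<le> 1/3"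
  using assms unfolding computes_bounded_error_def by (cases b) (auto simp: domI)

lemma length_pos_if_bichromatic:
  assumes cb: "computes_bounded_error N f W U0 Us Acc" and "bichromatic S f"
  shows "length Us > 0"
proof -
  obtain x z where "f x = Some True" "f z = Some False"
    using \<open>bichromatic S f\<close> unfolding bichromatic_def value_class_def by blast
  then have "accept_prob N W U0 Us Acc x \<ge> 2/3" "accept_prob N W U0 Us Acc z \<le> 1/3"
    using computes_bounded_error_accept_prob[OF cb] by (metis (full_types))+
  moreover have Acc: "Acc \<subseteq> {..<(N + 1) * W}"
    using cb unfolding computes_bounded_error_def by simp
  ultimately have "(\<Sum>s<length Us. query_mass N W U0 Us x z s) \<ge> 1 / (1872 * (real (length Us) + 1))"
    using query_mass_sum_ge[OF computes_bounded_error_unitary_algorithm[OF cb] Acc, of x z] by simp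
  then show ?thesis by (cases "length Us") auto
qed

lemma sum_query_mass_ge_card:
  assumes cb: "computes_bounded_error N f W U0 Us Acc"
    and A: "\<And>x. x \<in> A \<Longrightarrow> f x = Some (accept_prob N W U0 Us Acc z \<le> 1/2)"
  shows "real (card A) / (1872 * (real (length Us) + 1))
    \<le> (\<Sum>x\<in>A. \<Sum>s<length Us. query_mass N W U0 Us x z s)"
proof -
  have Acc: "Acc \<subseteq> {..<(N + 1) * W}" using cb unfolding computes_bounded_error_def by simp
  have "1 / (1872 * (real (length Us) + 1)) \<le> (\<Sum>s<length Us. query_mass N W U0 Us x z s)"
    if "x \<in> A" for x
  proof (rule query_mass_sum_ge[OF computes_bounded_error_unitary_algorithm[OF cb] Acc])
    from computes_bounded_error_accept_prob[OF cb A[OF that]]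
    show "\<bar>accept_prob N W U0 Us Acc x - accept_prob N W U0 Us Acc z\<bar> \<ge> 1 / 6"
      by (auto split: if_splits)
  qed
  then show ?thesis
    using sum_mono[of A "\<lambda>_. 1 / (1872 * (real (length Us) + 1))"] by simp
qed

lemma exists_frequently_differing_position:
  assumes cb: "computes_bounded_error N f W U0 Us Acc"
    and S: "finite S" "S \<subseteq> dom f" "bichromatic S f"
  shows "\<exists>b. \<exists>i<N. real (card (value_class S f b))
           \<le> 3744 * (real (length Us) + 1)\<^sup>2 * real (card {x\<in>value_class S f b. x ! i \<noteq> z ! i})"
proof (rule ccontr)
  define T where "T = real (length Us)"
  define A where "A = value_class S f (accept_prob N W U0 Us Acc z \<le> 1/2)"
  define B where "B = real (card A) / (3744 * (T + 1)\<^sup>2)"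
  have A: "finite A" "card A > 0"
    using S unfolding A_def value_class_def bichromatic_def
    by (auto simp: card_gt_0_iff, (metis (full_types))+)
  have "T \<ge> 0" unfolding T_def by simp
  then have "B > 0" unfolding B_def using A(2) by (intro divide_pos_pos) auto
  assume "\<not> ?thesis"
  then have "3744 * (T + 1)\<^sup>2 * real (card {x\<in>A. x ! i \<noteq> z ! i}) < real (card A)" if "i < N" for i
    using that unfolding A_def T_def by (auto simp: not_le)
  then have few: "real (card {x\<in>A. x ! i \<noteq> z ! i}) \<le> B" if "i < N" for i
    using that \<open>T \<ge> 0\<close> unfolding B_def by (simp add: pos_le_divide_eq mult.commute less_imp_le)
  have cancel: "2 * u * (c / (3744 * u\<^sup>2)) = c / (1872 * u)" if "u > 0" for u c :: real
    using that by (simp add: power2_eq_square field_simps)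
  have "2 * (T + 1) * B = real (card A) / (1872 * (T + 1))"
    unfolding B_def by (rule cancel) (use \<open>T \<ge> 0\<close> in simp)
  also have "\<dots> \<le> (\<Sum>x\<in>A. \<Sum>s<length Us. query_mass N W U0 Us x z s)"
    using sum_query_mass_ge_card[OF cb, of A z] unfolding A_def T_def value_class_def by simp
  also have "\<dots> \<le> T * B"
    using sum_query_mass_le[OF computes_bounded_error_unitary_algorithm[OF cb] A(1)
        less_imp_le[OF \<open>B > 0\<close>] few]
    unfolding T_def .
  finally have "2 * (T + 1) * B \<le> T * B" .
  moreover have "T * B \<ge> 0" using \<open>T \<ge> 0\<close> \<open>B > 0\<close> by simp
  ultimately have "B \<le> 0" by (simp add: algebra_simps)
  then show False using \<open>B > 0\<close> by simp
qed

section \<open>Decision trees from a decreasing potential\<close>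

definition dt_computes :: "nat \<Rightarrow> dtree \<Rightarrow> bool list set \<Rightarrow> (bool list \<rightharpoonup> bool) \<Rightarrow> bool" where
  "dt_computes N t S f \<longleftrightarrow> dt_valid N t \<and> (\<forall>x\<in>S. Some (dt_eval t x) = f x)"

lemma D_le_dt_depth: "dt_computes N t (dom f) f \<Longrightarrow> D N f \<le> dt_depth t"
  unfolding D_def dt_computes_def by (rule Least_le) blast

lemma dt_computes_Leaf:
  assumes "S \<subseteq> dom f" "\<not> bichromatic S f"
  shows "\<exists>b. dt_computes N (Leaf b) S f"
proof -
  obtain b where b: "value_class S f (\<not> b) = {}"
    using assms(2) unfolding bichromatic_def by (metis (full_types))
  have "f x = Some b" if x: "x \<in> S" for x
  proof -
    obtain c where "f x = Some c" using assms(1) x by (auto simp: dom_def)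
    with b x show ?thesis unfolding value_class_def by (cases c; cases b) auto
  qed
  then show ?thesis unfolding dt_computes_def by auto
qed

lemma card_value_class_ge_1: "finite S \<Longrightarrow> bichromatic S f \<Longrightarrow> card (value_class S f b) \<ge> 1"
  unfolding bichromatic_def by (cases b) (simp_all add: Suc_le_eq card_gt_0_iff value_class_def)

lemma card_value_class_le: "finite S \<Longrightarrow> card (value_class S f b) \<le> card S"
  unfolding value_class_def by (intro card_mono) auto

lemma card_value_class_mono:
  "finite S \<Longrightarrow> S' \<subseteq> S \<Longrightarrow> card (value_class S' f b) \<le> card (value_class S f b)"
  unfolding value_class_def by (intro card_mono) auto

lemma card_ge_1_if_bichromatic: "finite S \<Longrightarrow> bichromatic S f \<Longrightarrow> card S \<ge> 1"
  using card_value_class_ge_1[of S f True] card_value_class_le[of S f True] by linarith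

lemma ln_card_value_class_mono:
  assumes "finite S" "S' \<subseteq> S" "bichromatic S' f"
  shows "ln (real (card (value_class S' f b))) \<le> ln (real (card (value_class S f b)))"
  using card_value_class_mono[OF assms(1,2), of f b]
    card_value_class_ge_1[OF finite_subset[OF assms(2,1)] assms(3), of b]
  by simp

definition majority_bit :: "bool list set \<Rightarrow> nat \<Rightarrow> bool" where
  "majority_bit S i \<longleftrightarrow> card S \<le> 2 * card {x\<in>S. x ! i}"

lemma card_minority_branch:
  assumes "finite S" "a \<noteq> majority_bit S i"
  shows "2 * card {x\<in>S. x ! i = a} \<le> card S"
proof -
  have "S = {x\<in>S. \<not> x ! i} \<union> {x\<in>S. x ! i}" by auto
  then have "card {x\<in>S. \<not> x ! i} + card {x\<in>S. x ! i} = card S"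
    using assms(1)
    by (metis (no_types, lifting) card_Un_disjoint disjoint_iff finite_Un mem_Collect_eq)
  then show ?thesis using assms(2) unfolding majority_bit_def by (cases a) auto
qed

definition potential :: "real \<Rightarrow> (bool list \<rightharpoonup> bool) \<Rightarrow> bool list set \<Rightarrow> real" where
  "potential K f S = log 2 (real (card S))
     + K * (ln (real (card (value_class S f True))) + ln (real (card (value_class S f False))))"

lemma card_ge_2_if_bichromatic:
  assumes "finite S" "bichromatic S f"
  shows "card S \<ge> 2"
proof -
  have "2 \<le> card (value_class S f True) + card (value_class S f False)"
    using card_value_class_ge_1[OF assms] by (metis add_mono one_add_one)
  also have "\<dots> = card (value_class S f True \<union> value_class S f False)"
    using assms(1) unfolding value_class_def by (intro card_Un_disjoint[symmetric]) auto
  also have "\<dots> \<le> card S"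
    using assms(1) unfolding value_class_def by (intro card_mono) auto
  finally show ?thesis .
qed

lemma potential_ge_1:
  assumes "K \<ge> 0" "finite S" "bichromatic S f"
  shows "potential K f S \<ge> 1"
proof -
  have "card S \<ge> 2" using card_ge_2_if_bichromatic[OF assms(2,3)] .
  then have "log 2 (real (card S)) \<ge> 1" by (simp add: le_log_iff)
  moreover have "ln (real (card (value_class S f b))) \<ge> 0" for b
    using card_value_class_ge_1[OF assms(2,3)] by simp
  ultimately show ?thesis
    unfolding potential_def using assms(1)
    by (metis add_increasing2 add_nonneg_nonneg mult_nonneg_nonneg)
qed

lemma ln_le_log2: "x \<ge> 1 \<Longrightarrow> ln x \<le> log 2 x"
proof -
  assume "x \<ge> 1"
  have "ln (2::real) \<le> 1" using ln_le_minus_one[of 2] by simp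
  with \<open>x \<ge> 1\<close> have "ln x * ln 2 \<le> ln x * 1"
    by (intro mult_left_mono) simp_all
  then show ?thesis by (simp add: log_def field_simps)
qed

lemma potential_le_log:
  assumes "K \<ge> 0" "finite S" "bichromatic S f"
  shows "potential K f S \<le> (1 + 2 * K) * log 2 (real (card S))"
proof -
  have ln_le: "ln (real (card (value_class S f b))) \<le> log 2 (real (card S))" for b
  proof -
    have card: "1 \<le> card (value_class S f b)" "card (value_class S f b) \<le> card S"
      using card_value_class_ge_1[OF assms(2,3)] card_value_class_le[OF assms(2)] by auto
    then have "ln (real (card (value_class S f b))) \<le> ln (real (card S))"
      by (subst ln_le_cancel_iff) auto
    also have "\<dots> \<le> log 2 (real (card S))"
      using card by (intro ln_le_log2) linarith
    finally show ?thesis .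
  qed
  have "ln (real (card (value_class S f True))) + ln (real (card (value_class S f False)))
      \<le> 2 * log 2 (real (card S))"
    using ln_le[of True] ln_le[of False] by linarith
  then have "K * (ln (real (card (value_class S f True))) + ln (real (card (value_class S f False))))
      \<le> K * (2 * log 2 (real (card S)))"
    using assms(1) by (rule mult_left_mono)
  then show ?thesis
    unfolding potential_def by (simp add: algebra_simps)
qed

lemma potential_minority_branch:
  assumes K: "K \<ge> 0" and S: "finite S" and a: "a \<noteq> majority_bit S i"
    and bi: "bichromatic {x\<in>S. x ! i = a} f"
  shows "potential K f {x\<in>S. x ! i = a} \<le> potential K f S - 1"
proof -
  define S' where "S' = {x\<in>S. x ! i = a}"
  have "finite S'" using S unfolding S'_def by simp
  have "card S' \<ge> 1"
    using card_ge_1_if_bichromatic[OF \<open>finite S'\<close> bi[folded S'_def]] .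
  then have "log 2 (real (card S')) + 1 = log 2 (2 * real (card S'))"
    by (simp add: log_mult)
  also have "\<dots> \<le> log 2 (real (card S))"
    using card_minority_branch[OF S a] \<open>card S' \<ge> 1\<close> unfolding S'_def
    by (subst log_le_cancel_iff) (auto simp flip: of_nat_mult)
  finally have "log 2 (real (card S')) \<le> log 2 (real (card S)) - 1" by simp
  moreover have
    "K * (ln (real (card (value_class S' f True))) + ln (real (card (value_class S' f False))))
      \<le> K * (ln (real (card (value_class S f True))) + ln (real (card (value_class S f False))))"
    using ln_card_value_class_mono[OF S _ bi] K unfolding S'_def
    by (intro mult_left_mono add_mono) auto
  ultimately show ?thesis
    unfolding potential_def S'_def by linarith
qed

lemma ln_shrink_by_inverse:
  fixes K C C' :: real
  assumes "K > 0" "C' > 0" "C > 0" "C' \<le> (1 - 1 / K) * C"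
  shows "K * ln C' \<le> K * ln C - 1"
proof -
  have "(1 - 1 / K) * C > 0" using assms(2,4) by linarith
  then have q: "1 - 1 / K > 0" using assms(3) by (simp add: zero_less_mult_iff)
  have "ln C' \<le> ln (1 - 1 / K) + ln C"
    using assms q by (simp add: ln_mult_pos[symmetric])
  also have "\<dots> \<le> - 1 / K + ln C"
    using ln_le_minus_one[OF q] by simp
  finally show ?thesis
    using assms(1) by (simp add: field_simps)
qed

lemma potential_majority_branch:
  assumes K: "K \<ge> 1" and S: "finite S"
    and many: "real (card (value_class S f b)) \<le> K * real (card {x\<in>value_class S f b. x ! i \<noteq> m})"
    and bi: "bichromatic {x\<in>S. x ! i = m} f"
  shows "potential K f {x\<in>S. x ! i = m} \<le> potential K f S - 1"
proof -
  define S' where "S' = {x\<in>S. x ! i = m}"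
  define C where "C = real (card (value_class S f b))"
  define C' where "C' = real (card (value_class S' f b))"
  define E where "E = {x\<in>value_class S f b. x ! i \<noteq> m}"
  have S': "finite S'" "S' \<subseteq> S" using S unfolding S'_def by auto
  have "card (value_class S' f b) + card E = card (value_class S' f b \<union> E)"
    using S unfolding S'_def E_def value_class_def by (intro card_Un_disjoint[symmetric]) auto
  also have "\<dots> \<le> card (value_class S f b)"
    using S unfolding S'_def E_def value_class_def by (intro card_mono) auto
  finally have "C' + real (card E) \<le> C"
    unfolding C_def C'_def by linarith
  then have "K * C' + K * real (card E) \<le> K * C"
    using K by (metis distrib_left mult_left_mono order_trans zero_le_one)
  then have "K * C' + C \<le> K * C"
    using many unfolding C_def E_def by linarith
  then have "C' \<le> (1 - 1 / K) * C"
    using K by (simp add: field_simps)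
  moreover have "1 \<le> C'"
    using card_value_class_ge_1[OF S'(1) bi[folded S'_def]] unfolding C'_def by simp
  moreover have "C' \<le> C"
    using card_value_class_mono[OF S S'(2)] unfolding C_def C'_def by simp
  ultimately have "K * ln C' \<le> K * ln C - 1"
    using K by (intro ln_shrink_by_inverse) auto
  moreover have "card S' \<le> card S" "1 \<le> card S'"
    using card_mono[OF S S'(2)] card_ge_1_if_bichromatic[OF S'(1) bi[folded S'_def]] by auto
  then have "log 2 (real (card S')) \<le> log 2 (real (card S))"
    by (subst log_le_cancel_iff) auto
  moreover have "K * ln (real (card (value_class S' f (\<not> b))))
      \<le> K * ln (real (card (value_class S f (\<not> b))))"
    using ln_card_value_class_mono[OF S S'(2) bi[folded S'_def]] K by (intro mult_left_mono) auto
  ultimately show ?thesis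
    unfolding potential_def S'_def C_def C'_def by (cases b) (simp_all add: algebra_simps)
qed

lemma decision_tree_depth_le_potential:
  assumes K: "K \<ge> 1"
    and split: "\<And>S. finite S \<Longrightarrow> S \<subseteq> dom f \<Longrightarrow> bichromatic S f \<Longrightarrow>
      \<exists>b. \<exists>i<N. real (card (value_class S f b))
        \<le> K * real (card {x\<in>value_class S f b. x ! i \<noteq> majority_bit S i})"
  shows "finite S \<Longrightarrow> S \<subseteq> dom f \<Longrightarrow> bichromatic S f \<Longrightarrow>
    \<exists>t. dt_computes N t S f \<and> real (dt_depth t) \<le> potential K f S"
proof (induction "card S" arbitrary: S rule: less_induct)
  case less
  obtain b i where i: "i < N" and many: "real (card (value_class S f b))
      \<le> K * real (card {x\<in>value_class S f b. x ! i \<noteq> majority_bit S i})"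
    using split[OF less.prems] by blast
  have child: "\<exists>t. dt_computes N t {x\<in>S. x ! i = a} f \<and> real (dt_depth t) + 1 \<le> potential K f S"
    for a
  proof (cases "bichromatic {x\<in>S. x ! i = a} f")
    case False
    moreover have "{x\<in>S. x ! i = a} \<subseteq> dom f" using less.prems(2) by auto
    ultimately obtain c where "dt_computes N (Leaf c) {x\<in>S. x ! i = a} f"
      using dt_computes_Leaf by blast
    then show ?thesis
      using potential_ge_1[OF _ less.prems(1,3), of K] K by (intro exI[of _ "Leaf c"]) auto
  next
    case bi: True
    have drop: "potential K f {x\<in>S. x ! i = a} \<le> potential K f S - 1"
    proof (cases "a = majority_bit S i")
      case True
      then show ?thesis
        using potential_majority_branch[OF K less.prems(1) many] bi by simp
    next
      case False
      then show ?thesis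
        using potential_minority_branch[OF _ less.prems(1)] bi K by simp
    qed
    then have "{x\<in>S. x ! i = a} \<subset> S" by auto
    then have "card {x\<in>S. x ! i = a} < card S"
      using less.prems(1) by (rule psubset_card_mono[rotated])
    then obtain t where "dt_computes N t {x\<in>S. x ! i = a} f"
      and "real (dt_depth t) \<le> potential K f {x\<in>S. x ! i = a}"
      using less.hyps[of "{x\<in>S. x ! i = a}"] less.prems(1,2) bi by auto
    then show ?thesis using drop by (intro exI[of _ t]) auto
  qed
  obtain t0 t1 where
    t0: "dt_computes N t0 {x\<in>S. x ! i = False} f" "real (dt_depth t0) + 1 \<le> potential K f S" and
    t1: "dt_computes N t1 {x\<in>S. x ! i = True} f" "real (dt_depth t1) + 1 \<le> potential K f S"
    using child[of False] child[of True] by blast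
  have "dt_computes N (Node i t0 t1) S f"
    using i t0(1) t1(1) unfolding dt_computes_def by auto
  moreover have "real (dt_depth (Node i t0 t1)) \<le> potential K f S"
    using t0(2) t1(2) by (simp add: max_def)
  ultimately show ?case by blast
qed

section \<open>An exact algorithm\<close>

fun bits_value :: "bool list \<Rightarrow> nat" where
  "bits_value [] = 0"
| "bits_value (a # xs) = (if a then 1 else 0) + 2 * bits_value xs"

lemma bits_value_snoc: "bits_value (xs @ [a]) = bits_value xs + (if a then 2 ^ length xs else 0)"
  by (induction xs) auto

lemma bits_value_less: "bits_value xs < 2 ^ length xs"
  by (induction xs) auto

lemma bits_value_inj: "length xs = length ys \<Longrightarrow> bits_value xs = bits_value ys \<Longrightarrow> xs = ys"
proof (induction xs arbitrary: ys)
  case Nil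
  then show ?case by simp
next
  case (Cons a xs)
  then obtain b ys' where ys: "ys = b # ys'" by (cases ys) auto
  have "(if a then 1 else 0) + 2 * bits_value xs = (if b then 1 else 0) + 2 * bits_value ys'"
    using Cons.prems ys by simp
  then have "a = b" "bits_value xs = bits_value ys'" by (cases a; cases b; simp; presburger)+
  then show ?case using Cons ys by simp
qed

definition basis_vec :: "nat \<Rightarrow> complex \<Rightarrow> nat \<Rightarrow> complex" where
  "basis_vec k c = (\<lambda>m. if m = k then c else 0)"

lemma sum_mult_basis_vec: "k < d \<Longrightarrow> (\<Sum>l<d. U j l * basis_vec k c l) = U j k * c"
  unfolding basis_vec_def by (auto simp: if_distrib cong: if_cong)

lemma sum_basis_vec_mult: "k < d \<Longrightarrow> (\<Sum>l<d. basis_vec k c l * g l) = c * g k"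
  using sum_mult_basis_vec[of k d "\<lambda>_ l. g l" undefined c] by (simp add: mult.commute)

lemma sum_norm_basis_vec_sq:
  assumes "finite A"
  shows "(\<Sum>k\<in>A. (cmod (basis_vec k0 c k))\<^sup>2) = (if k0 \<in> A then (cmod c)\<^sup>2 else 0)"
proof -
  have "(\<Sum>k\<in>A. (cmod (basis_vec k0 c k))\<^sup>2) = (\<Sum>k\<in>A. if k = k0 then (cmod c)\<^sup>2 else 0)"
    unfolding basis_vec_def by (intro sum.cong) auto
  then show ?thesis using assms by (simp add: sum.delta')
qed

lemma mat_vec_basis_vec:
  "k < d \<Longrightarrow> mat_vec d U (basis_vec k c) = (\<lambda>r. if r < d then U r k * c else 0)"
  unfolding mat_vec_def basis_vec_def by (auto simp: if_distrib cong: if_cong)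

lemma mat_vec_basis_vec_add: "k1 < d \<Longrightarrow> k2 < d \<Longrightarrow>
   mat_vec d U (\<lambda>m. basis_vec k1 a m + basis_vec k2 b m)
     = (\<lambda>r. if r < d then U r k1 * a + U r k2 * b else 0)"
  unfolding mat_vec_def by (rule ext) (simp only: distrib_left sum.distrib sum_mult_basis_vec)

lemma query_op_basis_vec: "query_op N x (basis_vec k c) = basis_vec k (query_sign N x k * c)"
  unfolding query_op_eq basis_vec_def by auto

lemma query_op_basis_vec_add:
  "query_op N x (\<lambda>r. basis_vec k a r + basis_vec k' b r)
     = (\<lambda>r. basis_vec k (query_sign N x k * a) r + basis_vec k' (query_sign N x k' * b) r)"
  unfolding query_op_eq basis_vec_def by (rule ext) (simp add: distrib_left)

lemma div_mod_mult_add: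
  fixes M q r :: nat assumes "r < M" shows "(M * q + r) div M = q" "(M * q + r) mod M = r"
  using assms by (simp_all add: add.commute[of "M * q"])

lemma query_sign_workspace: "query_sign N x ((N + 1) * w) = 1"
  by (simp only: query_sign_def mod_mult_self1_is_0) simp

lemma query_sign_query_slot:
  "j < N \<Longrightarrow> query_sign N x ((N + 1) * w + (j + 1)) = (if x ! j then -1 else 1)"
  unfolding query_sign_def using div_mod_mult_add[of "j + 1" "N + 1" w] by simp

definition perm_mat :: "(nat \<Rightarrow> nat) \<Rightarrow> nat \<Rightarrow> nat \<Rightarrow> complex" where
  "perm_mat \<pi> r c = (if r = \<pi> c then 1 else 0)"

lemma perm_mat_unitary:
  assumes "\<And>k. k < d \<Longrightarrow> \<pi> k < d" "inj_on \<pi> {..<d}"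
  shows "unitary_mat d (perm_mat \<pi>)"
  unfolding unitary_mat_def
proof (intro allI impI)
  fix j k assume j: "j < d" and k: "k < d"
  have "(\<Sum>l<d. cnj (perm_mat \<pi> l j) * perm_mat \<pi> l k)
      = (\<Sum>l<d. if l = \<pi> j then (if \<pi> j = \<pi> k then 1 else 0) else 0)"
    unfolding perm_mat_def by (intro sum.cong) auto
  also have "\<dots> = (if \<pi> j = \<pi> k then 1 else 0)" using assms(1)[OF j] by simp
  also have "\<dots> = (if j = k then 1 else 0)" using assms(2) j k by (auto dest: inj_onD)
  finally show "(\<Sum>l<d. cnj (perm_mat \<pi> l j) * perm_mat \<pi> l k) = (if j = k then 1 else 0)" .
qed

lemma mat_vec_perm_mat_basis_vec:
  "k < d \<Longrightarrow> \<pi> k < d \<Longrightarrow> mat_vec d (perm_mat \<pi>) (basis_vec k c) = basis_vec (\<pi> k) c"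
  by (simp add: mat_vec_basis_vec) (auto simp: perm_mat_def basis_vec_def)

definition inv_sqrt2 :: complex where "inv_sqrt2 = complex_of_real (1 / sqrt 2)"

lemma inv_sqrt2_sq_mult: "inv_sqrt2 * (inv_sqrt2 * x) = x / 2"
proof -
  have "(1 / sqrt 2) * (1 / sqrt 2) = (1 / 2 :: real)" by (simp add: field_simps)
  then have "inv_sqrt2 * inv_sqrt2 = 1 / 2"
    unfolding inv_sqrt2_def of_real_mult[symmetric] by simp
  then show ?thesis by (simp add: mult.assoc[symmetric])
qed

lemma cnj_inv_sqrt2 [simp]: "cnj inv_sqrt2 = inv_sqrt2"
  unfolding inv_sqrt2_def by simp

text \<open>A Hadamard gate on each pair of basis states \<open>M * w\<close>, \<open>M * w + p\<close>, the identity on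
  all other basis states.\<close>

definition pair_hadamard :: "nat \<Rightarrow> nat \<Rightarrow> nat \<Rightarrow> nat \<Rightarrow> complex" where
  "pair_hadamard M p r c =
     (if r = c then (if r mod M = p then - inv_sqrt2 else if r mod M = 0 then inv_sqrt2 else 1)
      else if (r mod M = 0 \<and> c = r + p) \<or> (c mod M = 0 \<and> r = c + p) then inv_sqrt2 else 0)"

lemma pair_hadamard_sym: "pair_hadamard M p r c = pair_hadamard M p c r"
  unfolding pair_hadamard_def by auto

lemma cnj_pair_hadamard [simp]: "cnj (pair_hadamard M p r c) = pair_hadamard M p r c"
  unfolding pair_hadamard_def by auto

lemma mod_add_less: fixes b M p :: nat shows "b mod M = 0 \<Longrightarrow> p < M \<Longrightarrow> (b + p) mod M = p"
  by (metis mod_add_left_eq add_0 mod_less)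

lemma add_less_mult:
  fixes a M W p :: nat
  assumes "a mod M = 0" "a < M * W" "p < M"
  shows "a + p < M * W"
proof -
  obtain q where q: "a = M * q" using assms(1) by (auto elim: dvdE simp: dvd_eq_mod_eq_0)
  then have "q + 1 \<le> W" using assms(2) by (metis Suc_eq_plus1 Suc_leI mult_less_cancel1)
  then have "M * (q + 1) \<le> M * W" by (rule mult_le_mono2)
  then show ?thesis using q assms(3) by simp
qed

lemma sub_mod_eq_0: fixes a M p :: nat assumes "a mod M = p" shows "(a - p) mod M = 0" "p \<le> a"
proof -
  have e: "a div M * M + p = a" using div_mult_mod_eq[of a M] assms by simp
  then have "a - p = a div M * M" by linarith
  then show "(a - p) mod M = 0" by simp
  show "p \<le> a" using e by linarith
qed

lemma pair_hadamard_col_fixed: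
  "0 < p \<Longrightarrow> p < M \<Longrightarrow> a mod M \<noteq> 0 \<Longrightarrow> a mod M \<noteq> p \<Longrightarrow> pair_hadamard M p l a = basis_vec a 1 l"
  unfolding pair_hadamard_def basis_vec_def using mod_add_less by auto

lemma pair_hadamard_col_low:
  "0 < p \<Longrightarrow> p < M \<Longrightarrow> a mod M = 0 \<Longrightarrow>
    pair_hadamard M p l a = basis_vec a inv_sqrt2 l + basis_vec (a + p) inv_sqrt2 l"
  unfolding pair_hadamard_def basis_vec_def using mod_add_less[of l M p] by auto

lemma pair_hadamard_col_high:
  assumes p: "0 < p" "p < M" and a: "a mod M = p"
  shows "pair_hadamard M p l a = basis_vec a (- inv_sqrt2) l + basis_vec (a - p) inv_sqrt2 l"
proof -
  have ap: "p \<le> a" and am: "(a - p) mod M = 0" using sub_mod_eq_0[OF a] by simp_all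
  consider "l = a" | "l = a - p" | "l \<noteq> a" "l \<noteq> a - p" by blast
  then show ?thesis
  proof cases
    case 1
    moreover have "a - p \<noteq> a" using p ap by simp
    ultimately show ?thesis using a unfolding pair_hadamard_def basis_vec_def by simp
  next
    case 2
    then have "l mod M = 0 \<and> a = l + p" using am ap by simp
    moreover have "a - p \<noteq> a" using p ap by simp
    ultimately show ?thesis using 2 unfolding pair_hadamard_def basis_vec_def by simp
  next
    case 3
    then have "\<not> (l mod M = 0 \<and> a = l + p)" "\<not> (a mod M = 0 \<and> l = a + p)" using a p by auto
    then show ?thesis
      using 3 unfolding pair_hadamard_def basis_vec_def by (simp only: if_False) simp
  qed
qed

lemma pair_hadamard_unitary:
  assumes p: "0 < p" "p < M"
  shows "unitary_mat (M * W) (pair_hadamard M p)"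
  unfolding unitary_mat_def
proof (intro allI impI)
  fix a b assume a: "a < M * W" and b: "b < M * W"
  define d where "d = M * W"
  define H where "H = pair_hadamard M p"
  consider (low) "a mod M = 0" | (high) "a mod M = p" | (fixed) "a mod M \<noteq> 0" "a mod M \<noteq> p"
    by blast
  then have "(\<Sum>l<d. H l a * H l b) = (if a = b then 1 else 0)"
  proof cases
    case low
    have ap: "a + p < d" using add_less_mult[OF low a p(2)] d_def by simp
    have "(\<Sum>l<d. H l a * H l b)
        = (\<Sum>l<d. basis_vec a inv_sqrt2 l * H l b)
          + (\<Sum>l<d. basis_vec (a + p) inv_sqrt2 l * H l b)"
      by (simp add: H_def pair_hadamard_col_low[OF p low] distrib_right sum.distrib)
    also have "\<dots> = inv_sqrt2 * H b a + inv_sqrt2 * H b (a + p)"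
      using a ap d_def by (simp add: sum_basis_vec_mult H_def pair_hadamard_sym[of M p _ b])
    also have "\<dots> = (if a = b then 1 else 0)"
      using p unfolding H_def pair_hadamard_col_low[OF p low]
        pair_hadamard_col_high[OF p mod_add_less[OF low p(2)]]
      by (auto simp: basis_vec_def inv_sqrt2_sq_mult algebra_simps)
    finally show ?thesis .
  next
    case high
    have ap: "p \<le> a" and am: "(a - p) mod M = 0" using sub_mod_eq_0[OF high] by simp_all
    have "(\<Sum>l<d. H l a * H l b)
        = (\<Sum>l<d. basis_vec a (- inv_sqrt2) l * H l b)
          + (\<Sum>l<d. basis_vec (a - p) inv_sqrt2 l * H l b)"
      by (simp add: H_def pair_hadamard_col_high[OF p high] distrib_right sum.distrib)
    also have "\<dots> = - inv_sqrt2 * H b a + inv_sqrt2 * H b (a - p)"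
      using a d_def by (simp add: sum_basis_vec_mult H_def pair_hadamard_sym[of M p _ b])
    also have "\<dots> = (if a = b then 1 else 0)"
      using p ap unfolding H_def pair_hadamard_col_high[OF p high] pair_hadamard_col_low[OF p am]
      by (auto simp: basis_vec_def inv_sqrt2_sq_mult algebra_simps)
    finally show ?thesis .
  next
    case fixed
    have "(\<Sum>l<d. H l a * H l b) = (\<Sum>l<d. basis_vec a 1 l * H l b)"
      by (simp add: H_def pair_hadamard_col_fixed[OF p fixed])
    also have "\<dots> = H a b" using a d_def by (simp add: sum_basis_vec_mult)
    also have "\<dots> = (if a = b then 1 else 0)"
      by (simp add: H_def pair_hadamard_sym[of M p a b] pair_hadamard_col_fixed[OF p fixed]
          basis_vec_def)
    finally show ?thesis .
  qed
  then show "(\<Sum>l<M * W. cnj (pair_hadamard M p l a) * pair_hadamard M p l b)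
      = (if a = b then 1 else 0)"
    unfolding H_def d_def by simp
qed

lemma pair_hadamard_split:
  assumes p: "0 < p" "p < M" and k: "k mod M = 0" "k < M * W"
  shows "mat_vec (M * W) (pair_hadamard M p) (basis_vec k c)
    = (\<lambda>r. basis_vec k (inv_sqrt2 * c) r + basis_vec (k + p) (inv_sqrt2 * c) r)"
proof (rule ext)
  fix r
  have kp: "k + p < M * W" using add_less_mult[OF k p(2)] .
  show "mat_vec (M * W) (pair_hadamard M p) (basis_vec k c) r
      = basis_vec k (inv_sqrt2 * c) r + basis_vec (k + p) (inv_sqrt2 * c) r"
  proof (cases "r < M * W")
    case True
    then show ?thesis
      using k
      by (simp add: mat_vec_basis_vec pair_hadamard_col_low[OF p k(1)]) (simp add: basis_vec_def)
  next
    case False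
    then show ?thesis using k kp by (simp add: mat_vec_basis_vec) (simp add: basis_vec_def)
  qed
qed

lemma pair_hadamard_merge:
  assumes p: "0 < p" "p < M" and k: "k mod M = 0" "k < M * W"
  shows "mat_vec (M * W) (pair_hadamard M p)
      (\<lambda>r. basis_vec k (inv_sqrt2 * c) r
        + basis_vec (k + p) ((if b then -1 else 1) * (inv_sqrt2 * c)) r)
    = basis_vec (if b then k + p else k) c"
    (is "mat_vec _ _ ?v = _")
proof (rule ext)
  fix r
  have kp: "k + p < M * W" using add_less_mult[OF k p(2)] .
  show "mat_vec (M * W) (pair_hadamard M p) ?v r = basis_vec (if b then k + p else k) c r"
  proof (cases "r < M * W")
    case True
    have "mat_vec (M * W) (pair_hadamard M p) ?v r
        = pair_hadamard M p r k * (inv_sqrt2 * c)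
          + pair_hadamard M p r (k + p) * ((if b then -1 else 1) * (inv_sqrt2 * c))"
      using True k kp by (simp add: mat_vec_basis_vec_add)
    also have "\<dots> = (basis_vec k inv_sqrt2 r + basis_vec (k + p) inv_sqrt2 r) * (inv_sqrt2 * c)
        + (basis_vec (k + p) (- inv_sqrt2) r + basis_vec k inv_sqrt2 r)
          * ((if b then -1 else 1) * (inv_sqrt2 * c))"
      using pair_hadamard_col_low[OF p k(1), of r]
        pair_hadamard_col_high[OF p mod_add_less[OF k(1) p(2)], of r] by simp
    also have "\<dots> = basis_vec (if b then k + p else k) c r"
      using p by (cases b) (auto simp: basis_vec_def inv_sqrt2_sq_mult algebra_simps)
    finally show ?thesis .
  next
    case False
    then show ?thesis using k kp by (simp add: mat_vec_def basis_vec_def)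
  qed
qed

text \<open>Swaps the basis states \<open>M * w + (j + 1)\<close> and \<open>M * (w + 2 ^ j)\<close> for \<open>w < 2 ^ j\<close>:
  a query register pointing at bit \<open>j\<close> is turned into bit \<open>j\<close> of the workspace.\<close>

definition bit_shift :: "nat \<Rightarrow> nat \<Rightarrow> nat \<Rightarrow> nat" where
  "bit_shift M j k =
     (if k mod M = j + 1 \<and> k div M < 2 ^ j then M * (k div M + 2 ^ j)
      else if k mod M = 0 \<and> 2 ^ j \<le> k div M \<and> k div M < 2 ^ Suc j
        then M * (k div M - 2 ^ j) + (j + 1)
      else k)"

lemma bit_shift_query_slot:
  assumes "j + 1 < M" "w < 2 ^ j"
  shows "bit_shift M j (M * w + (j + 1)) = M * (w + 2 ^ j)"
  using assms div_mod_mult_add[OF assms(1), of w] unfolding bit_shift_def by simp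

lemma bit_shift_workspace_slot:
  assumes "j + 1 < M" "w < 2 ^ j"
  shows "bit_shift M j (M * w) = M * w"
  using assms unfolding bit_shift_def by simp

lemma bit_shift_workspace_high_slot:
  assumes "j + 1 < M" "w < 2 ^ j"
  shows "bit_shift M j (M * (w + 2 ^ j)) = M * w + (j + 1)"
  using assms unfolding bit_shift_def by simp

lemma bit_shift_cases:
  assumes jM: "j + 1 < M"
  obtains (up) q where "q < 2 ^ j" "k = M * q + (j + 1)"
    | (down) q where "q < 2 ^ j" "k = M * (q + 2 ^ j)"
    | (fixed) "bit_shift M j k = k"
proof -
  have k: "k = M * (k div M) + k mod M" by simp
  consider "k mod M = j + 1 \<and> k div M < 2 ^ j"
    | "k mod M = 0 \<and> 2 ^ j \<le> k div M \<and> k div M < 2 ^ Suc j"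
    | "bit_shift M j k = k"
    unfolding bit_shift_def by argo
  then show ?thesis
  proof cases
    case 1
    then show ?thesis using k up by metis
  next
    case 2
    then have "k = M * (k div M - 2 ^ j + 2 ^ j)" using k by simp
    moreover have "k div M - 2 ^ j < 2 ^ j" using 2 by (simp, linarith)
    ultimately show ?thesis using down by blast
  qed (rule fixed)
qed

lemma bit_shift_involution:
  assumes jM: "j + 1 < M"
  shows "bit_shift M j (bit_shift M j k) = k"
proof (cases rule: bit_shift_cases[OF jM, of k, case_names up down fixed])
  case (up q)
  then show ?thesis by (simp only: bit_shift_query_slot[OF jM] bit_shift_workspace_high_slot[OF jM])
next
  case (down q)
  then show ?thesis by (simp only: bit_shift_query_slot[OF jM] bit_shift_workspace_high_slot[OF jM])
qed simp

lemma bit_shift_less: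
  assumes jM: "j + 1 < M" and W: "2 ^ Suc j \<le> W" and k: "k < M * W"
  shows "bit_shift M j k < M * W"
proof (cases rule: bit_shift_cases[OF jM, of k, case_names up down fixed])
  case (up q)
  then have "q + 2 ^ j < W" using W by simp
  then show ?thesis using up jM by (simp only: bit_shift_query_slot[OF jM]) simp
next
  case (down q)
  have "M * q + (j + 1) < M * (q + 1)" using jM by simp
  also have "\<dots> \<le> M * W" using down W by (intro mult_le_mono2) simp
  finally show ?thesis using down by (simp only: bit_shift_workspace_high_slot[OF jM])
qed (use k in simp)

lemma bit_shift_unitary:
  fixes M W j :: nat
  assumes jM: "j + 1 < M" and W: "2 ^ Suc j \<le> W"
  shows "unitary_mat (M * W) (perm_mat (bit_shift M j))"
proof (rule perm_mat_unitary)
  show "\<And>k. k < M * W \<Longrightarrow> bit_shift M j k < M * W" using bit_shift_less[OF jM W] by blast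
  show "inj_on (bit_shift M j) {..<M * W}"
    by (rule inj_on_inverseI[where g = "bit_shift M j"]) (rule bit_shift_involution[OF jM])
qed

definition run_gates ::
  "nat \<Rightarrow> nat \<Rightarrow> bool list \<Rightarrow> (nat \<Rightarrow> complex) \<Rightarrow> (nat \<Rightarrow> nat \<Rightarrow> complex) list \<Rightarrow> (nat \<Rightarrow> complex)" where
  "run_gates N W x v Us = foldl (\<lambda>v U. mat_vec ((N + 1) * W) U (query_op N x v)) v Us"

lemma run_gates_append: "run_gates N W x v (Us @ Vs) = run_gates N W x (run_gates N W x v Us) Vs"
  unfolding run_gates_def by simp

lemma final_state_eq_run_gates:
  "final_state N W U0 Us x = run_gates N W x (mat_vec ((N + 1) * W) U0 init_state) Us"
  unfolding final_state_def run_gates_def ..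

definition learn_bit_gates :: "nat \<Rightarrow> nat \<Rightarrow> (nat \<Rightarrow> nat \<Rightarrow> complex) list" where
  "learn_bit_gates N j =
     [pair_hadamard (N + 1) (j + 1), pair_hadamard (N + 1) (j + 1), perm_mat (bit_shift (N + 1) j)]"

lemma learn_bit_gates_unitary:
  assumes "j < N" "U \<in> set (learn_bit_gates N j)"
  shows "unitary_mat ((N + 1) * 2 ^ N) U"
proof -
  have "2 ^ Suc j \<le> (2::nat) ^ N" using assms(1) by (intro power_increasing) auto
  then show ?thesis
    using assms pair_hadamard_unitary[of "j + 1" "N + 1"] bit_shift_unitary[of j "N + 1" "2 ^ N"]
    unfolding learn_bit_gates_def by auto
qed

text \<open>Hadamard, query and Hadamard on the pair \<open>|0, w\<rangle>, |j + 1, w\<rangle>\<close> map \<open>|0, w\<rangle>\<close> to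
  \<open>|x\<^sub>j (j + 1), w\<rangle>\<close>; the shift then records \<open>x\<^sub>j\<close> as bit \<open>j\<close> of the workspace.  The query
  preceding the first Hadamard acts trivially on \<open>|0, w\<rangle>\<close>.\<close>

lemma learn_bit:
  assumes j: "j < N" and w: "w < 2 ^ j" and W: "W = 2 ^ N" and c: "cmod c = 1"
  shows "\<exists>c'. cmod c' = 1 \<and> run_gates N W x (basis_vec ((N + 1) * w) c) (learn_bit_gates N j)
      = basis_vec ((N + 1) * (w + (if x ! j then 2 ^ j else 0))) c'"
proof -
  define M where "M = N + 1"
  define k where "k = M * w"
  define p where "p = j + 1"
  define k' where "k' = (if x ! j then k + p else k)"
  have p: "0 < p" "p < M" and jM: "j + 1 < M" unfolding p_def M_def using j by simp_all
  have "w < W" using less_trans[OF w] j W by simp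
  have k1: "k mod M = 0" unfolding k_def by (rule mod_mult_self1_is_0)
  have k2: "k < M * W" unfolding k_def M_def using \<open>w < W\<close> by (intro mult_strict_left_mono) simp_all
  note k = k1 k2
  have "2 ^ Suc j \<le> W" using j W by (simp add: Suc_le_eq del: power_Suc)
  have k': "k' < M * W" unfolding k'_def using k add_less_mult[OF k p(2)] by simp
  have query_phase:
    "query_op N x (\<lambda>r. basis_vec k (inv_sqrt2 * c) r + basis_vec (k + p) (inv_sqrt2 * c) r)
      = (\<lambda>r. basis_vec k (inv_sqrt2 * c) r
          + basis_vec (k + p) ((if x ! j then -1 else 1) * (inv_sqrt2 * c)) r)"
    unfolding query_op_basis_vec_add
    using query_sign_workspace[of N x w] query_sign_query_slot[OF j, of x w]
    unfolding k_def M_def p_def by simp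
  have query_idle: "query_op N x (basis_vec k c) = basis_vec k c"
    using query_sign_workspace[of N x w] unfolding k_def M_def by (simp add: query_op_basis_vec)
  have "run_gates N W x (basis_vec k c) (learn_bit_gates N j)
      = mat_vec (M * W) (perm_mat (bit_shift M j)) (query_op N x (basis_vec k' c))"
    unfolding run_gates_def learn_bit_gates_def foldl.simps M_def[symmetric] p_def[symmetric]
    by (simp only: query_idle pair_hadamard_split[OF p k] query_phase pair_hadamard_merge[OF p k]
        k'_def)
  also have "\<dots> = basis_vec (bit_shift M j k') (query_sign N x k' * c)"
    unfolding query_op_basis_vec
    using k' bit_shift_less[OF jM \<open>2 ^ Suc j \<le> W\<close> k'] by (simp add: mat_vec_perm_mat_basis_vec)
  also have "bit_shift M j k' = M * (w + (if x ! j then 2 ^ j else 0))"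
    unfolding k'_def k_def p_def
    using bit_shift_query_slot[OF jM w] bit_shift_workspace_slot[OF jM w] by simp
  finally show ?thesis
    using c unfolding M_def k_def by (intro exI[of _ "query_sign N x k' * c"]) (simp add: norm_mult)
qed

lemma learn_prefix:
  assumes x: "length x = N" and W: "W = 2 ^ N" and "j \<le> N"
  shows "\<exists>c. cmod c = 1 \<and> run_gates N W x (basis_vec 0 1) (concat (map (learn_bit_gates N) [0..<j]))
      = basis_vec ((N + 1) * bits_value (take j x)) c"
  using \<open>j \<le> N\<close>
proof (induction j)
  case 0
  then show ?case by (intro exI[of _ 1]) (simp add: run_gates_def)
next
  case (Suc j)
  then obtain c where "cmod c = 1" and IH: "run_gates N W x (basis_vec 0 1)
      (concat (map (learn_bit_gates N) [0..<j])) = basis_vec ((N + 1) * bits_value (take j x)) c"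
    by auto
  have j: "j < N" using Suc.prems by simp
  have "bits_value (take j x) < 2 ^ j" using bits_value_less[of "take j x"] x j by simp
  from learn_bit[OF j this W \<open>cmod c = 1\<close>, of x] obtain c' where "cmod c' = 1" and
    step: "run_gates N W x (basis_vec ((N + 1) * bits_value (take j x)) c) (learn_bit_gates N j)
      = basis_vec ((N + 1) * (bits_value (take j x) + (if x ! j then 2 ^ j else 0))) c'"
    by blast
  moreover have "bits_value (take (Suc j) x) = bits_value (take j x) + (if x ! j then 2 ^ j else 0)"
    using j x by (simp add: take_Suc_conv_app_nth bits_value_snoc)
  ultimately show ?case
    using IH by (intro exI[of _ c']) (simp add: run_gates_append)
qed

text \<open>\<open>Q\<close> is a \<open>LEAST\<close> over the query counts of bounded-error algorithms, so a lower bound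
  on it needs such an algorithm to exist: read the input bit by bit into the workspace and accept
  on the encodings of the \<open>1\<close>-inputs.\<close>

lemma exists_exact_algorithm:
  assumes pf: "partial_fun_on N f"
  shows "\<exists>W U0 Us Acc. computes_bounded_error N f W U0 Us Acc"
proof -
  define W :: nat where "W = 2 ^ N"
  define Us where "Us = concat (map (learn_bit_gates N) [0..<N])"
  define Acc where "Acc = {(N + 1) * bits_value y | y. f y = Some True \<and> length y = N}"
  have "W \<ge> 1" unfolding W_def by simp
  have U0: "unitary_mat ((N + 1) * W) (perm_mat id)" by (rule perm_mat_unitary) auto
  have Us: "\<forall>U\<in>set Us. unitary_mat ((N + 1) * W) U"
  proof
    fix U assume "U \<in> set Us"
    then obtain j where "j < N" "U \<in> set (learn_bit_gates N j)" unfolding Us_def by auto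
    then show "unitary_mat ((N + 1) * W) U" unfolding W_def by (rule learn_bit_gates_unitary)
  qed
  have Acc: "Acc \<subseteq> {..<(N + 1) * W}"
  proof
    fix k assume "k \<in> Acc"
    then obtain y where "k = (N + 1) * bits_value y" "length y = N" unfolding Acc_def by blast
    moreover have "(N + 1) * bits_value y < (N + 1) * W"
      using bits_value_less[of y] \<open>length y = N\<close> unfolding W_def
      by (intro mult_strict_left_mono) simp_all
    ultimately show "k \<in> {..<(N + 1) * W}" by simp
  qed
  have accept: "accept_prob N W (perm_mat id) Us Acc x = (if f x = Some True then 1 else 0)"
    if "x \<in> dom f" for x
  proof -
    have x: "length x = N" using pf that unfolding partial_fun_on_def by auto
    have init: "mat_vec ((N + 1) * W) (perm_mat id) init_state = basis_vec 0 1"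
      using mat_vec_perm_mat_basis_vec[of 0 "(N + 1) * W" id 1] \<open>W \<ge> 1\<close>
      unfolding init_state_def basis_vec_def by simp
    obtain c where "cmod c = 1" and
      "run_gates N W x (basis_vec 0 1) Us = basis_vec ((N + 1) * bits_value (take N x)) c"
      using learn_prefix[OF x W_def order.refl] unfolding Us_def by blast
    then have final: "final_state N W (perm_mat id) Us x = basis_vec ((N + 1) * bits_value x) c"
      unfolding final_state_eq_run_gates init using x by simp
    have "((N + 1) * bits_value x \<in> Acc) = (f x = Some True)"
    proof
      assume "(N + 1) * bits_value x \<in> Acc"
      then obtain y where eq: "(N + 1) * bits_value x = (N + 1) * bits_value y"
        and y: "f y = Some True" "length y = N"
        unfolding Acc_def mem_Collect_eq by blast
      have "bits_value x = bits_value y" using eq by (simp only: mult_cancel1) simp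
      then have "x = y" using bits_value_inj[of x y] x y(2) by simp
      then show "f x = Some True" using y(1) by simp
    next
      assume "f x = Some True"
      then show "(N + 1) * bits_value x \<in> Acc"
        unfolding Acc_def mem_Collect_eq using x by (intro exI[of _ x]) simp
    qed
    then show ?thesis
      unfolding accept_prob_def final
      using sum_norm_basis_vec_sq[OF finite_subset[OF Acc]] \<open>cmod c = 1\<close> by simp
  qed
  have "computes_bounded_error N f W (perm_mat id) Us Acc"
    unfolding computes_bounded_error_def using \<open>W \<ge> 1\<close> U0 Us Acc accept by simp
  then show ?thesis by blast
qed

lemma finite_dom_if_partial_fun_on: "partial_fun_on N f \<Longrightarrow> finite (dom f)"
  unfolding partial_fun_on_def
  using finite_lists_length_eq[of "UNIV :: bool set" N] by (simp add: finite_subset)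

lemma Q_attained:
  assumes "partial_fun_on N f"
  shows "\<exists>W U0 Us Acc. length Us = Q N f \<and> computes_bounded_error N f W U0 Us Acc"
proof -
  have "\<exists>T W U0 Us Acc. length Us = T \<and> computes_bounded_error N f W U0 Us Acc"
    using exists_exact_algorithm[OF assms] by blast
  then show ?thesis
    unfolding Q_def by (rule LeastI_ex)
qed

lemma sqrt_div_log_le:
  fixes T L D :: real
  assumes T: "T \<ge> 1" and L: "L \<ge> 1" and D: "D \<le> (1 + 2 * (3744 * (T + 1)\<^sup>2)) * L"
  shows "1 / 174 * sqrt D / L \<le> T"
proof -
  have "(T + 1)\<^sup>2 \<le> (2 * T)\<^sup>2" using T by (intro power_mono) auto
  moreover have "1 \<le> T\<^sup>2" using T by (simp add: one_le_power)
  ultimately have "1 + 2 * (3744 * (T + 1)\<^sup>2) \<le> (174 * T)\<^sup>2"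
    by (simp add: power_mult_distrib)
  then have "D \<le> (174 * T)\<^sup>2 * L"
    using D L by (meson mult_right_mono order_trans zero_le_one)
  also have "\<dots> \<le> (174 * T)\<^sup>2 * L\<^sup>2"
    using L by (intro mult_left_mono) (auto simp: power2_eq_square)
  finally have "sqrt D \<le> 174 * T * L"
    using T L by (simp add: real_le_lsqrt power_mult_distrib)
  then show ?thesis using L by (simp add: field_simps)
qed

lemma exists_position_differing_from_majority:
  assumes "computes_bounded_error N f W U0 Us Acc" "finite S" "S \<subseteq> dom f" "bichromatic S f"
  shows "\<exists>b. \<exists>i<N. real (card (value_class S f b)) \<le> 3744 * (real (length Us) + 1)\<^sup>2
            * real (card {x\<in>value_class S f b. x ! i \<noteq> majority_bit S i})"
proof -
  obtain b i where "i < N" and "real (card (value_class S f b)) \<le> 3744 * (real (length Us) + 1)\<^sup>2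
      * real (card {x\<in>value_class S f b. x ! i \<noteq> map (majority_bit S) [0..<N] ! i})"
    using exists_frequently_differing_position[OF assms, of "map (majority_bit S) [0..<N]"] by blast
  moreover have "map (majority_bit S) [0..<N] ! i = majority_bit S i" using \<open>i < N\<close> by simp
  ultimately show ?thesis by auto
qed

lemma D_eq_0_if_not_bichromatic: "\<not> bichromatic (dom f) f \<Longrightarrow> D N f = 0"
  using dt_computes_Leaf[OF subset_refl] D_le_dt_depth by fastforce

lemma Q_ge_1_if_bichromatic:
  assumes "partial_fun_on N f" "bichromatic (dom f) f"
  shows "real (Q N f) \<ge> 1"
  using Q_attained[OF assms(1)] length_pos_if_bichromatic[OF _ assms(2)]
  by (metis One_nat_def Suc_leI of_nat_1 of_nat_le_iff)

lemma D_le_Q_sq_log: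
  assumes pf: "partial_fun_on N f" and bi: "bichromatic (dom f) f"
  shows "real (D N f) \<le> (1 + 2 * (3744 * (real (Q N f) + 1)\<^sup>2)) * log 2 (real (card (dom f)))"
proof -
  define K where "K = 3744 * (real (Q N f) + 1)\<^sup>2"
  have fin: "finite (dom f)" using finite_dom_if_partial_fun_on[OF pf] .
  obtain W U0 Us Acc where "length Us = Q N f" and cb: "computes_bounded_error N f W U0 Us Acc"
    using Q_attained[OF pf] by blast
  have "1 \<le> (real (Q N f) + 1)\<^sup>2" by (intro one_le_power) simp
  then have K: "K \<ge> 1" unfolding K_def by linarith
  obtain t where t: "dt_computes N t (dom f) f" "real (dt_depth t) \<le> potential K f (dom f)"
    using decision_tree_depth_le_potential[OF K _ fin subset_refl bi]
      exists_position_differing_from_majority[OF cb]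
    unfolding K_def \<open>length Us = Q N f\<close> by blast
  have "real (D N f) \<le> real (dt_depth t)" using D_le_dt_depth[OF t(1)] by simp
  also have "\<dots> \<le> (1 + 2 * K) * log 2 (real (card (dom f)))"
    using t(2) potential_le_log[OF _ fin bi, of K] K by linarith
  finally show ?thesis unfolding K_def .
qed

theorem theorem3:
  shows "\<exists>c>0. \<forall>N f. partial_fun_on N f \<longrightarrow>
           real (Q N f) \<ge> c * sqrt (real (D N f)) / log 2 (real (card (dom f)))"
proof (intro exI[of _ "1/174"] conjI allI impI)
  show "(0::real) < 1/174" by simp
  fix N f assume pf: "partial_fun_on N f"
  show "real (Q N f) \<ge> 1/174 * sqrt (real (D N f)) / log 2 (real (card (dom f)))"
  proof (cases "bichromatic (dom f) f")
    case False
    then show ?thesis by (simp add: D_eq_0_if_not_bichromatic)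
  next
    case True
    have "log 2 (real (card (dom f))) \<ge> 1"
      using card_ge_2_if_bichromatic[OF finite_dom_if_partial_fun_on[OF pf] True]
      by (simp add: le_log_iff)
    then show ?thesis
      by (rule sqrt_div_log_le[OF Q_ge_1_if_bichromatic[OF pf True] _ D_le_Q_sq_log[OF pf True]])
  qed
qed

end
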